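(* Fix $k\in[n]$ and arbitrary negotiating positions $\mu_i'\in\mathbb{R}^n$ for all $i\neq k$. For $\mu_k'\in\mathbb{R}^n$, let $M'$ be the matrix with columns $\mu_1',\dots,\mu_n'$ and $(W',P')$ the stable point for $M'$. Then the map $\mu_k'\mapsto g_k(W',P')$ is a quadratic function of $\mu_k'$ whose Hessian is negative definite.
   Context: Fix agents $[n]=\{1,\dots,n\}$. Let $\Sigma\in\mathbb{R}^{n\times n}$ be symmetric positive definite, $\Gamma=\mathrm{diag}(\gamma_1,\dots,\gamma_n)$ with all $\gamma_i>0$, and let $M\in\mathbb{R}^{n\times n}$ be the matrix of true beliefs with $i$-th column $\mu_i=Me_i$. For a matrix of reported negotiating positions $M'\in\mathbb{R}^{n\times n}$, the stable point for $M'$ is the unique pair $(W,P)$ of real $n\times n$ matrices with $W=W^T$, $P^T=-P$ and $M'-P=2\Sigma W\Gamma$; equivalently $\mathrm{vec}(W)=\tfrac12(\Gamma\otimes\Sigma+\Sigma\otimes\Gamma)^{-1}\mathrm{vec}(M'+M'^T)$ and $P=M'-2\Sigma W\Gamma$. Here $\mathrm{vec}$ stacks columns and $e_i$ is the $i$-th standard basis vector. Agent $i$'s (true) utility at $(W,P)$ is $g_i(W,P)=w_i^T(\mu_i-Pe_i)-\gamma_i\, w_i^T\Sigma w_i$, where $w_i=We_i$. *)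

theory Defs
  imports "HOL-Analysis.Analysis"
begin

text \<open>Matrices are n x n real matrices indexed by a finite type 'n
  (row index first: A $ i $ j). Column j of A is column j A.\<close>

definition sym_pos_def_mat :: "real^'n^'n \<Rightarrow> bool" where
  "sym_pos_def_mat S \<longleftrightarrow> transpose S = S \<and> (\<forall>x. x \<noteq> 0 \<longrightarrow> x \<bullet> (S *v x) > 0)"

definition diag_mat :: "real^'n \<Rightarrow> real^'n^'n" where
  "diag_mat g = (\<chi> i j. if i = j then g $ i else 0)"

definition stable_point ::
  "real^'n^'n \<Rightarrow> real^'n^'n \<Rightarrow> real^'n^'n \<Rightarrow> (real^'n^'n) \<times> (real^'n^'n)" where
  "stable_point Sg Gm M' =
     (THE (W, P). transpose W = W \<and> transpose P = - P \<and>
                 M' - P = 2 *\<^sub>R (Sg ** W ** Gm))"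

text \<open>Agent i's true utility g_i(W,P) = w_i^T (mu_i - P e_i) - gamma_i w_i^T Sg w_i.\<close>
definition utility ::
  "real^'n^'n \<Rightarrow> real^'n \<Rightarrow> real^'n^'n \<Rightarrow> 'n \<Rightarrow> (real^'n^'n) \<times> (real^'n^'n) \<Rightarrow> real" where
  "utility Sg g M i WP =
     (let w = column i (fst WP) in
        w \<bullet> (column i M - column i (snd WP)) - g $ i * (w \<bullet> (Sg *v w)))"

definition set_column :: "real^'n^'n \<Rightarrow> 'n \<Rightarrow> real^'n \<Rightarrow> real^'n^'n" where
  "set_column M0 k x = (\<chi> i j. if j = k then x $ i else M0 $ i $ j)"

text \<open>f is a quadratic function f(x) = 1/2 x^T H x + b^T x + c with H symmetric;
  then H is exactly the Hessian of f.\<close>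
definition quadratic_with_hessian :: "(real^'n \<Rightarrow> real) \<Rightarrow> real^'n^'n \<Rightarrow> bool" where
  "quadratic_with_hessian f H \<longleftrightarrow> transpose H = H \<and>
     (\<exists>b c. \<forall>x. f x = (1/2) * (x \<bullet> (H *v x)) + b \<bullet> x + c)"

definition neg_def_mat :: "real^'n^'n \<Rightarrow> bool" where
  "neg_def_mat H \<longleftrightarrow> (\<forall>x. x \<noteq> 0 \<longrightarrow> x \<bullet> (H *v x) < 0)"

end

theory Submission imports Defs begin

text \<open>The stable weights solve \<open>L W = (M' + M'\<^sup>T)/2\<close> for the Lyapunov operator
  \<open>L W = \<Sigma> W \<Gamma> + \<Gamma> W \<Sigma>\<close>, whose matrix on \<open>vec W\<close> is \<open>\<Gamma>\<otimes>\<Sigma> + \<Sigma>\<otimes>\<Gamma>\<close>.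
  The pairing \<open>\<langle>D, L D\<rangle>\<close> is a positively weighted sum of the \<open>\<Sigma>\<close>-norms of the columns and
  rows of \<open>D\<close>, so \<open>L\<close> is invertible and the stable point depends linearly on \<open>M'\<close>.
  Hence agent \<open>k\<close>'s weight vector is \<open>w = c + T x\<close> with \<open>T\<close> linear in \<open>x = \<mu>'\<^sub>k\<close>, and
  \<open>g\<^sub>k = w\<cdot>\<mu>\<^sub>k - w\<cdot>x + \<gamma>\<^sub>k w\<^sup>T\<Sigma>w\<close> is quadratic in \<open>x\<close> with quadratic part
  \<open>\<gamma>\<^sub>k (Tx)\<^sup>T\<Sigma>(Tx) - (Tx)\<cdot>x\<close>. For \<open>D = W(x e\<^sub>k\<^sup>T)\<close>, which is symmetric, both
  \<open>(Tx)\<cdot>x\<close> and \<open>2 \<Sum>\<^sub>j \<gamma>\<^sub>j d\<^sub>j\<^sup>T\<Sigma>d\<^sub>j\<close> equal \<open>\<langle>D, L D\<rangle>\<close>; the latter is positive for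
  \<open>x \<noteq> 0\<close> and exceeds \<open>\<gamma>\<^sub>k (Tx)\<^sup>T\<Sigma>(Tx)\<close>, so the quadratic part is negative definite.\<close>

lemma transpose_add: "transpose (A + B) = transpose A + transpose (B :: 'a::semiring_1^'n^'m)"
  by (simp add: transpose_def vec_eq_iff)

lemma transpose_diff: "transpose (A - B) = transpose A - transpose (B :: 'a::ring_1^'n^'m)"
  by (simp add: transpose_def vec_eq_iff)

lemma matrix_add_rdistrib: "(A + B) ** C = A ** C + B ** (C :: 'a::semiring_1^'p^'n)"
  by (simp add: matrix_matrix_mult_def vec_eq_iff sum.distrib distrib_right)

lemma inner_transpose_transpose: "transpose A \<bullet> transpose B = A \<bullet> (B :: real^'n^'m)"
  unfolding inner_vec_def transpose_def by (subst sum.swap) simp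

lemma inner_transpose_matrix_vector: "x \<bullet> (transpose A *v y) = (A *v x) \<bullet> (y :: real^'n)"
  by (metis dot_lmul_matrix inner_commute transpose_matrix_vector)

lemma transpose_diag_mat: "transpose (diag_mat g) = diag_mat g"
  by (simp add: transpose_def diag_mat_def vec_eq_iff)

lemma matrix_mul_diag_mat_right: "(A ** diag_mat g) $ i $ j = A $ i $ j * g $ j"
  by (simp add: matrix_matrix_mult_def diag_mat_def if_distrib if_distribR cong: if_cong)

lemma column_matrix_mul_diag_mat: "column j (A ** diag_mat g) = g $ j *\<^sub>R column j A"
  by (simp add: column_def vec_eq_iff matrix_mul_diag_mat_right)

lemma linear_column: "linear (column j :: real^'n^'m \<Rightarrow> real^'m)"
  by (rule linearI) (simp_all add: column_def vec_eq_iff)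

lemma column_matrix_mul: "column j (A ** B) = A *v column j B"
  by (simp add: column_def vec_eq_iff matrix_matrix_mult_def matrix_vector_mult_def)

lemma inner_matrix_mul_diag_mat:
  "D \<bullet> (S ** D ** diag_mat g) = (\<Sum>j\<in>UNIV. g $ j * (column j D \<bullet> (S *v column j D)))"
proof -
  have "D \<bullet> (S ** D ** diag_mat g) = (\<Sum>j\<in>UNIV. column j D \<bullet> column j (S ** D ** diag_mat g))"
    unfolding inner_vec_def column_def by (subst sum.swap) simp
  also have "\<dots> = (\<Sum>j\<in>UNIV. g $ j * (column j D \<bullet> (S *v column j D)))"
    by (simp only: column_matrix_mul_diag_mat) (simp add: column_matrix_mul)
  finally show ?thesis .
qed

lemma transpose_symmetric_matrix_mul:
  fixes S D G :: "real^'n^'n"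
  assumes "transpose S = S" "transpose G = G"
  shows "transpose (S ** D ** G) = G ** transpose D ** S"
  by (simp only: assms matrix_transpose_mul matrix_mul_assoc)

lemma inner_symmetrized_matrix_vector:
  "x \<bullet> ((A + transpose A) *v x) = 2 * (x \<bullet> (A *v (x :: real^'n)))"
  by (simp add: matrix_vector_mult_add_rdistrib inner_add_right inner_transpose_matrix_vector
      inner_commute del: transpose_matrix_vector)

lemma quadratic_with_hessian_symmetrized:
  assumes "\<And>x. f x = x \<bullet> (A *v x) + b \<bullet> x + c"
  shows "quadratic_with_hessian f (A + transpose A)"
  unfolding quadratic_with_hessian_def
  by (auto simp: transpose_add add.commute assms inner_symmetrized_matrix_vector)

lemma neg_def_mat_symmetrized:
  "neg_def_mat (A + transpose A) \<longleftrightarrow> (\<forall>x. x \<noteq> 0 \<longrightarrow> x \<bullet> (A *v x) < 0)"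
  by (simp add: neg_def_mat_def inner_symmetrized_matrix_vector)

definition lyapunov :: "real^'n^'n \<Rightarrow> real^'n^'n \<Rightarrow> real^'n^'n \<Rightarrow> real^'n^'n" where
  "lyapunov S G W = S ** W ** G + G ** W ** S"

lemma linear_lyapunov: "linear (lyapunov S G)"
  by (rule linearI)
    (simp_all add: lyapunov_def matrix_add_ldistrib matrix_add_rdistrib matrix_scalar_ac
      scalar_matrix_assoc[symmetric] scaleR_add_right)

lemma transpose_lyapunov:
  assumes "transpose S = S" "transpose G = G"
  shows "transpose (lyapunov S G W) = lyapunov S G (transpose W)"
  by (simp add: lyapunov_def transpose_add transpose_symmetric_matrix_mul assms add.commute)

definition column_quadratic_sum :: "real^'n^'n \<Rightarrow> real^'n \<Rightarrow> real^'n^'n \<Rightarrow> real" where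
  "column_quadratic_sum S g D = (\<Sum>j\<in>UNIV. g $ j * (column j D \<bullet> (S *v column j D)))"

lemma inner_lyapunov_diag_mat:
  assumes "transpose S = S"
  shows "D \<bullet> lyapunov S (diag_mat g) D =
    column_quadratic_sum S g D + column_quadratic_sum S g (transpose D)"
proof -
  have "D \<bullet> (diag_mat g ** D ** S) = transpose D \<bullet> (S ** transpose D ** diag_mat g)"
    by (metis inner_transpose_transpose transpose_symmetric_matrix_mul assms transpose_diag_mat)
  then show ?thesis
    by (simp add: lyapunov_def inner_add_right inner_matrix_mul_diag_mat column_quadratic_sum_def)
qed

lemma column_set_column: "column k (set_column M0 k x) = x"
  by (simp add: column_def set_column_def vec_eq_iff)

lemma set_column_split: "set_column M0 k x = set_column M0 k 0 + set_column 0 k x"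
  by (simp add: set_column_def vec_eq_iff)

lemma linear_set_column_zero: "linear (set_column (0 :: real^'n^'n) k)"
  by (rule linearI) (simp_all add: set_column_def vec_eq_iff)

lemma inner_set_column_zero: "D \<bullet> set_column 0 k x = column k D \<bullet> (x :: real^'n)"
  by (simp add: inner_vec_def set_column_def column_def if_distrib if_distribR cong: if_cong)

lemma set_column_symmetrized_eq_0:
  assumes "set_column 0 k x + transpose (set_column 0 k x) = (0 :: real^'n^'n)"
  shows "x = 0"
proof -
  have entry: "x $ i + (if i = k then x $ k else 0) = 0" for i
    using arg_cong[OF assms, of "\<lambda>A. A $ i $ k"]
    by (simp add: set_column_def transpose_def cong: if_cong)
  have "x $ i = 0" for i
    using entry[of i] entry[of k] by (cases "i = k") auto
  then show ?thesis
    by (simp add: vec_eq_iff)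
qed

lemma quadratic_form_linear_substitution:
  fixes T :: "real^'n \<Rightarrow> real^'n"
  assumes "linear T"
  shows "x \<bullet> ((\<gamma> *\<^sub>R (transpose (matrix T) ** S ** matrix T) - matrix T) *v x) =
    \<gamma> * (T x \<bullet> (S *v T x)) - T x \<bullet> x"
proof -
  have T: "matrix T *v y = T y" for y
    using matrix_vector_mul(2)[OF assms] by metis
  show ?thesis
    by (simp add: matrix_vector_mult_diff_rdistrib scaleR_matrix_vector_assoc[symmetric]
        matrix_vector_mul_assoc[symmetric] inner_diff_right inner_transpose_matrix_vector T
        inner_commute del: transpose_matrix_vector)
qed

lemma quadratic_affine_substitution:
  fixes T :: "real^'n \<Rightarrow> real^'n" and S :: "real^'n^'n"
  assumes "linear T" "transpose S = S"
  obtains b c0 where "\<And>x. (c + T x) \<bullet> \<mu> - (c + T x) \<bullet> x + \<gamma> * ((c + T x) \<bullet> (S *v (c + T x))) =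
    \<gamma> * (T x \<bullet> (S *v T x)) - T x \<bullet> x + b \<bullet> x + c0"
proof
  have T: "matrix T *v y = T y" for y
    using matrix_vector_mul(2)[OF assms(1)] by metis
  have S: "u \<bullet> (S *v v) = (S *v u) \<bullet> v" for u v
    by (metis assms(2) inner_transpose_matrix_vector)
  fix x
  show "(c + T x) \<bullet> \<mu> - (c + T x) \<bullet> x + \<gamma> * ((c + T x) \<bullet> (S *v (c + T x))) =
    \<gamma> * (T x \<bullet> (S *v T x)) - T x \<bullet> x +
    (transpose (matrix T) *v (\<mu> + (2 * \<gamma>) *\<^sub>R (S *v c)) - c) \<bullet> x + (c \<bullet> \<mu> + \<gamma> * (c \<bullet> (S *v c)))"
    using inner_transpose_matrix_vector[of x "matrix T"]
    by (simp add: T S[of c "T x"] matrix_vector_right_distrib inner_add_left inner_add_right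
        inner_diff_left inner_commute algebra_simps del: transpose_matrix_vector)
qed

locale negotiation =
  fixes Sg :: "real^'n^'n" and g :: "real^'n"
  assumes Sg_pos_def: "sym_pos_def_mat Sg" and g_pos: "\<And>i. 0 < g $ i"
begin

abbreviation Gm :: "real^'n^'n" where "Gm \<equiv> diag_mat g"

abbreviation L :: "real^'n^'n \<Rightarrow> real^'n^'n" where "L \<equiv> lyapunov Sg Gm"

lemma Sg_symmetric: "transpose Sg = Sg"
  using Sg_pos_def by (simp add: sym_pos_def_mat_def)

lemma Sg_quadratic_nonneg: "0 \<le> v \<bullet> (Sg *v v)"
  using Sg_pos_def by (cases "v = 0") (auto simp: sym_pos_def_mat_def less_imp_le)

lemma column_quadratic_sum_ge:
  "g $ j * (column j D \<bullet> (Sg *v column j D)) \<le> column_quadratic_sum Sg g D"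
  unfolding column_quadratic_sum_def
  by (rule member_le_sum) (auto intro: mult_nonneg_nonneg less_imp_le g_pos Sg_quadratic_nonneg)

lemma column_quadratic_sum_pos:
  assumes "D \<noteq> 0"
  shows "0 < column_quadratic_sum Sg g D"
proof -
  obtain j where "column j D \<noteq> 0"
    using assms by (auto simp: vec_eq_iff column_def)
  then have "0 < g $ j * (column j D \<bullet> (Sg *v column j D))"
    using Sg_pos_def g_pos by (simp add: sym_pos_def_mat_def)
  then show ?thesis
    using column_quadratic_sum_ge by (rule less_le_trans)
qed

lemma column_quadratic_sum_nonneg: "0 \<le> column_quadratic_sum Sg g D"
  unfolding column_quadratic_sum_def
  by (intro sum_nonneg mult_nonneg_nonneg) (auto intro: less_imp_le g_pos Sg_quadratic_nonneg)

lemma inj_lyapunov: "inj L"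
  unfolding linear_inj_iff_eq_0[OF linear_lyapunov]
proof (intro allI impI)
  fix D assume "L D = 0"
  then have "column_quadratic_sum Sg g D + column_quadratic_sum Sg g (transpose D) = 0"
    using inner_lyapunov_diag_mat[OF Sg_symmetric, of D] by (metis inner_zero_right)
  then show "D = 0"
    using column_quadratic_sum_pos column_quadratic_sum_nonneg
    by (metis add_pos_nonneg less_irrefl)
qed

definition stable_weights :: "real^'n^'n \<Rightarrow> real^'n^'n" where
  "stable_weights M' = inv L ((1/2) *\<^sub>R (M' + transpose M'))"

lemma lyapunov_stable_weights: "L (stable_weights M') = (1/2) *\<^sub>R (M' + transpose M')"
  unfolding stable_weights_def
  by (rule surj_f_inv_f[OF linear_inj_imp_surj[OF linear_lyapunov inj_lyapunov]])

lemma linear_stable_weights: "linear stable_weights"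
proof -
  have "linear (\<lambda>M'. (1/2) *\<^sub>R (M' + transpose M' :: real^'n^'n))"
    by (rule linearI) (simp_all add: transpose_add transpose_scalar algebra_simps)
  then show ?thesis
    unfolding stable_weights_def
    using linear_compose[OF _ inj_linear_imp_inv_linear[OF linear_lyapunov inj_lyapunov]]
    by (simp add: o_def)
qed

lemma symmetric_stable_weights: "transpose (stable_weights M') = stable_weights M'"
proof -
  have "L (transpose (stable_weights M')) = L (stable_weights M')"
    by (simp add: transpose_lyapunov[OF Sg_symmetric transpose_diag_mat, symmetric]
        lyapunov_stable_weights transpose_add transpose_scalar add.commute)
  then show ?thesis
    using inj_lyapunov by (simp add: inj_eq)
qed

lemma skew_residual_iff:
  assumes "transpose W = W"
  shows "transpose (M' - 2 *\<^sub>R (Sg ** W ** Gm)) = - (M' - 2 *\<^sub>R (Sg ** W ** Gm)) \<longleftrightarrow>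
    L W = (1/2) *\<^sub>R (M' + transpose M')"
proof -
  have "transpose (M' - 2 *\<^sub>R (Sg ** W ** Gm)) = transpose M' - 2 *\<^sub>R (Gm ** W ** Sg)"
    by (simp add: transpose_diff transpose_scalar transpose_symmetric_matrix_mul
        Sg_symmetric transpose_diag_mat assms)
  also have "\<dots> = - (M' - 2 *\<^sub>R (Sg ** W ** Gm)) \<longleftrightarrow> M' + transpose M' = 2 *\<^sub>R L W"
    unfolding lyapunov_def by (auto simp: algebra_simps)
  also have "\<dots> \<longleftrightarrow> L W = (1/2) *\<^sub>R (M' + transpose M')"
    by auto
  finally show ?thesis .
qed

lemma stable_point_eq:
  "stable_point Sg Gm M' = (stable_weights M', M' - 2 *\<^sub>R (Sg ** stable_weights M' ** Gm))"
  unfolding stable_point_def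
proof (rule the_equality; clarify)
  show "transpose (stable_weights M') = stable_weights M' \<and>
      transpose (M' - 2 *\<^sub>R (Sg ** stable_weights M' ** Gm)) =
        - (M' - 2 *\<^sub>R (Sg ** stable_weights M' ** Gm)) \<and>
      M' - (M' - 2 *\<^sub>R (Sg ** stable_weights M' ** Gm)) = 2 *\<^sub>R (Sg ** stable_weights M' ** Gm)"
    using skew_residual_iff[OF symmetric_stable_weights] lyapunov_stable_weights
      symmetric_stable_weights by simp
next
  fix W P
  assume W: "transpose W = W" and "transpose P = - P" and "M' - P = 2 *\<^sub>R (Sg ** W ** Gm)"
  then have P: "P = M' - 2 *\<^sub>R (Sg ** W ** Gm)"
    by (simp add: algebra_simps)
  with \<open>transpose P = - P\<close> have "L W = L (stable_weights M')"
    using skew_residual_iff[OF W] lyapunov_stable_weights by simp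
  then have "W = stable_weights M'"
    using inj_lyapunov by (simp add: inj_eq)
  with P show "W = stable_weights M' \<and> P = M' - 2 *\<^sub>R (Sg ** stable_weights M' ** Gm)"
    by simp
qed

lemma utility_stable_point:
  "utility Sg g M k (stable_point Sg Gm M') =
    (let w = column k (stable_weights M') in
      w \<bullet> column k M - w \<bullet> column k M' + g $ k * (w \<bullet> (Sg *v w)))"
  unfolding stable_point_eq utility_def Let_def fst_conv snd_conv
  by (simp only: linear_diff[OF linear_column] linear_scale[OF linear_column] column_matrix_mul_diag_mat)
    (simp add: column_matrix_mul inner_diff_right algebra_simps)

definition response :: "'n \<Rightarrow> real^'n \<Rightarrow> real^'n" where
  "response k x = column k (stable_weights (set_column 0 k x))"

lemma linear_response: "linear (response k)"
proof -
  have "linear (column k \<circ> stable_weights \<circ> set_column 0 k)"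
    by (intro linear_compose linear_column linear_stable_weights linear_set_column_zero)
  then show ?thesis
    by (simp add: response_def[abs_def] o_def)
qed

lemma column_stable_weights_set_column:
  "column k (stable_weights (set_column M0 k x)) =
    column k (stable_weights (set_column M0 k 0)) + response k x"
  unfolding response_def
  by (subst set_column_split)
    (simp only: linear_add[OF linear_stable_weights] linear_add[OF linear_column])

lemma response_gain:
  assumes "x \<noteq> 0"
  shows "g $ k * (response k x \<bullet> (Sg *v response k x)) < response k x \<bullet> x"
proof -
  define E where "E = set_column 0 k x"
  define D where "D = stable_weights E"
  have D_symmetric: "transpose D = D"
    unfolding D_def by (rule symmetric_stable_weights)
  have "D \<bullet> L D = 2 * column_quadratic_sum Sg g D"
    using inner_lyapunov_diag_mat[OF Sg_symmetric] D_symmetric by simp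
  moreover have "D \<bullet> L D = response k x \<bullet> x"
  proof -
    have "D \<bullet> transpose E = D \<bullet> E"
      by (metis D_symmetric inner_transpose_transpose)
    then show ?thesis
      by (simp add: D_def lyapunov_stable_weights inner_add_right E_def inner_set_column_zero
          response_def)
  qed
  moreover have "D \<noteq> 0"
  proof
    assume "D = 0"
    then have "(1/2) *\<^sub>R (E + transpose E) = 0"
      using lyapunov_stable_weights[of E] by (simp add: D_def lyapunov_def)
    then have "E + transpose E = 0"
      by simp
    then show False
      using assms set_column_symmetrized_eq_0 unfolding E_def by blast
  qed
  then have "0 < column_quadratic_sum Sg g D"
    by (rule column_quadratic_sum_pos)
  moreover have "g $ k * (response k x \<bullet> (Sg *v response k x)) \<le> column_quadratic_sum Sg g D"
    unfolding response_def E_def[symmetric] D_def[symmetric] by (rule column_quadratic_sum_ge)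
  ultimately show ?thesis
    by linarith
qed

definition utility_quadratic_part :: "'n \<Rightarrow> real^'n^'n" where
  "utility_quadratic_part k =
    g $ k *\<^sub>R (transpose (matrix (response k)) ** Sg ** matrix (response k)) - matrix (response k)"

lemma quadratic_form_utility_quadratic_part:
  "x \<bullet> (utility_quadratic_part k *v x) =
    g $ k * (response k x \<bullet> (Sg *v response k x)) - response k x \<bullet> x"
  unfolding utility_quadratic_part_def by (rule quadratic_form_linear_substitution[OF linear_response])

lemma utility_set_column_eq:
  obtains b c0 where "\<And>x. utility Sg g M k (stable_point Sg Gm (set_column M0 k x)) =
    x \<bullet> (utility_quadratic_part k *v x) + b \<bullet> x + c0"
proof -
  define c where "c = column k (stable_weights (set_column M0 k 0))"
  obtain b c0 where expansion: "\<And>x. (c + response k x) \<bullet> column k M - (c + response k x) \<bullet> x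
      + g $ k * ((c + response k x) \<bullet> (Sg *v (c + response k x))) =
    g $ k * (response k x \<bullet> (Sg *v response k x)) - response k x \<bullet> x + b \<bullet> x + c0"
    using quadratic_affine_substitution[OF linear_response Sg_symmetric] by blast
  show ?thesis
  proof
    fix x
    show "utility Sg g M k (stable_point Sg Gm (set_column M0 k x)) =
      x \<bullet> (utility_quadratic_part k *v x) + b \<bullet> x + c0"
      unfolding utility_stable_point Let_def column_stable_weights_set_column[of k M0 x]
        column_set_column c_def[symmetric] expansion quadratic_form_utility_quadratic_part ..
  qed
qed

lemma neg_def_mat_utility_hessian:
  "neg_def_mat (utility_quadratic_part k + transpose (utility_quadratic_part k))"
  unfolding neg_def_mat_symmetrized quadratic_form_utility_quadratic_part
  using response_gain by (simp add: inner_commute)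

end

theorem mainTheorem4:
  fixes Sg M M0 :: "real^'n^'n" and g :: "real^'n" and k :: 'n
  assumes "sym_pos_def_mat Sg"
    and "\<forall>i. g $ i > 0"
  shows "\<exists>H. quadratic_with_hessian
               (\<lambda>x. utility Sg g M k
                      (stable_point Sg (diag_mat g) (set_column M0 k x))) H
             \<and> neg_def_mat H"
proof -
  interpret negotiation Sg g
    using assms by unfold_locales auto
  obtain b c0 where "\<And>x. utility Sg g M k (stable_point Sg Gm (set_column M0 k x)) =
      x \<bullet> (utility_quadratic_part k *v x) + b \<bullet> x + c0"
    using utility_set_column_eq by blast
  then have "quadratic_with_hessian (\<lambda>x. utility Sg g M k (stable_point Sg Gm (set_column M0 k x)))
      (utility_quadratic_part k + transpose (utility_quadratic_part k))"
    by (rule quadratic_with_hessian_symmetrized)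
  with neg_def_mat_utility_hessian show ?thesis
    by blast
qed

end
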